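(* Let $\sigma_{01},\sigma_{12}>0$, $\sigma_{02}=\sigma_{01}+\sigma_{12}$, let $\Gamma_{11},\Gamma_{22}\ge0$ and $\Gamma_{12}=\Gamma_{21}=0$, and let $M=(M_1,M_2)$ with $M_1,M_2>0$. Then a minimizing configuration for $\overline{e_0}(M)$ cannot contain two different types of single bubbles, i.e. there are no indices $k,l$ with $m^k=(m_1^k,0)$, $m_1^k>0$, and $m^l=(0,m_2^l)$, $m_2^l>0$.
   Context: For $m=(m_1,m_2)$ with $m_1,m_2\ge0$ set $$e_0(m)=2\sigma_{01}\sqrt{\pi(m_1+m_2)}+2\sigma_{12}\sqrt{\pi m_2}+\sum_{i,j=1}^2\frac{\Gamma_{ij}m_im_j}{4\pi}.$$ $\overline{e_0}(M)=\inf\{\sum_{k\ge1}e_0(m^k): m^k=(m_1^k,m_2^k),\ m_i^k\ge0,\ \sum_k m_i^k=M_i,\ i=1,2\}$; a minimizing configuration is an admissible sequence $(m^k)$ attaining the infimum. *)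

theory Defs
  imports "HOL-Analysis.Analysis" "HOL-Library.Extended_Real"
begin

definition comp :: "real \<times> real \<Rightarrow> nat \<Rightarrow> real" where
  "comp m i = (if i = 1 then fst m else snd m)"

definition e0 :: "real \<Rightarrow> real \<Rightarrow> (nat \<Rightarrow> nat \<Rightarrow> real) \<Rightarrow> real \<times> real \<Rightarrow> real" where
  "e0 s01 s12 G m =
     2 * s01 * sqrt (pi * (fst m + snd m)) + 2 * s12 * sqrt (pi * snd m)
     + (\<Sum>i\<in>{1,2::nat}. \<Sum>j\<in>{1,2::nat}. G i j * comp m i * comp m j) / (4 * pi)"

text \<open>Admissible configurations: sequences (indexed by k, starting at 0 instead of 1)
  of nonnegative mass vectors whose components sum to M_1 and M_2.\<close>
definition admissible :: "real \<times> real \<Rightarrow> (nat \<Rightarrow> real \<times> real) \<Rightarrow> bool" where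
  "admissible M m \<longleftrightarrow>
     (\<forall>k. fst (m k) \<ge> 0 \<and> snd (m k) \<ge> 0) \<and>
     (\<lambda>k. fst (m k)) sums fst M \<and> (\<lambda>k. snd (m k)) sums snd M"

definition total_energy ::
  "real \<Rightarrow> real \<Rightarrow> (nat \<Rightarrow> nat \<Rightarrow> real) \<Rightarrow> (nat \<Rightarrow> real \<times> real) \<Rightarrow> ereal" where
  "total_energy s01 s12 G m = (\<Sum>k. ereal (e0 s01 s12 G (m k)))"

definition e0_bar :: "real \<Rightarrow> real \<Rightarrow> (nat \<Rightarrow> nat \<Rightarrow> real) \<Rightarrow> real \<times> real \<Rightarrow> ereal" where
  "e0_bar s01 s12 G M = (INF m\<in>{m. admissible M m}. total_energy s01 s12 G m)"

definition minimizing_config ::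
  "real \<Rightarrow> real \<Rightarrow> (nat \<Rightarrow> nat \<Rightarrow> real) \<Rightarrow> real \<times> real \<Rightarrow> (nat \<Rightarrow> real \<times> real) \<Rightarrow> bool" where
  "minimizing_config s01 s12 G M m \<longleftrightarrow>
     admissible M m \<and> total_energy s01 s12 G m = e0_bar s01 s12 G M"

end

theory Submission
  imports Defs
begin

text \<open>If a minimizing configuration contained a bubble of mass (a, 0) and another one of
  mass (0, b), merging them into a single bubble (a, b) would give an admissible configuration
  of strictly smaller energy: the s12-perimeter is unchanged and, since G 1 2 = G 2 1 = 0, so
  are the interaction terms, while the s01-perimeter drops from sqrt (pi a) + sqrt (pi b) to
  sqrt (pi (a + b)) by strict subadditivity of the square root.\<close>

lemma sqrt_add_less_add_sqrt:
  fixes a b :: real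
  assumes "a > 0" "b > 0"
  shows "sqrt (a + b) < sqrt a + sqrt b"
proof -
  have "(sqrt (a + b))\<^sup>2 < (sqrt a + sqrt b)\<^sup>2"
    using assms by (simp add: power2_eq_square algebra_simps)
  then show ?thesis
    by (rule power_less_imp_less_base) (use assms in simp)
qed

lemma sums_fun_upd:
  fixes f :: "nat \<Rightarrow> 'a::real_normed_vector"
  assumes "f sums s"
  shows "f(k := x) sums (s - f k + x)"
proof -
  have "(\<lambda>i. f i + (if i = k then x - f k else 0)) sums (s + (x - f k))"
    using assms sums_single[of k "\<lambda>_. x - f k"] by (rule sums_add)
  moreover have "(\<lambda>i. f i + (if i = k then x - f k else 0)) = f(k := x)"
    by auto
  ultimately show ?thesis
    by (simp add: algebra_simps)
qed

lemma sums_merge: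
  fixes f :: "nat \<Rightarrow> 'a::real_normed_vector"
  assumes "f sums s" "k \<noteq> l"
  shows "f(k := f k + f l, l := 0) sums s"
  using sums_fun_upd[OF sums_fun_upd[OF assms(1)], of k "f k + f l" l 0] assms(2) by simp

lemma e0_zero: "e0 s01 s12 G 0 = 0"
  by (simp add: e0_def comp_def)

lemma e0_nonneg:
  assumes "s01 \<ge> 0" "s12 \<ge> 0" "G 1 1 \<ge> 0" "G 1 2 \<ge> 0" "G 2 1 \<ge> 0" "G 2 2 \<ge> 0"
    and "fst p \<ge> 0" "snd p \<ge> 0"
  shows "e0 s01 s12 G p \<ge> 0"
proof -
  have "comp p i \<ge> 0" for i
    using assms by (simp add: comp_def)
  with assms show ?thesis
    unfolding e0_def by (intro add_nonneg_nonneg divide_nonneg_pos sum_nonneg) auto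
qed

lemma e0_diagonal:
  assumes "G 1 2 = 0" "G 2 1 = 0"
  shows "e0 s01 s12 G (x, y) = 2 * s01 * sqrt (pi * (x + y)) + 2 * s12 * sqrt (pi * y)
     + (G 1 1 * x * x + G 2 2 * y * y) / (4 * pi)"
  using assms by (simp add: e0_def comp_def)

lemma e0_merge_single_bubbles_less:
  assumes "s01 > 0" "G 1 2 = 0" "G 2 1 = 0" "a > 0" "b > 0"
  shows "e0 s01 s12 G (a, b) < e0 s01 s12 G (a, 0) + e0 s01 s12 G (0, b)"
proof -
  have "sqrt (pi * (a + b)) < sqrt (pi * a) + sqrt (pi * b)"
    using sqrt_add_less_add_sqrt[of "pi * a" "pi * b"] assms by (simp add: distrib_left)
  then have "2 * s01 * sqrt (pi * (a + b)) < 2 * s01 * (sqrt (pi * a) + sqrt (pi * b))"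
    using assms by simp
  then show ?thesis
    using assms by (simp add: e0_diagonal add_divide_distrib algebra_simps)
qed

lemma total_energy_eq_ereal:
  assumes "(\<lambda>k. e0 s01 s12 G (m k)) sums s"
  shows "total_energy s01 s12 G m = ereal s"
  using assms unfolding total_energy_def by (simp add: sums_ereal[symmetric] sums_unique[symmetric])

lemma total_energy_finite_sums:
  assumes "\<And>k. e0 s01 s12 G (m k) \<ge> 0" "total_energy s01 s12 G m < \<infinity>"
  shows "(\<lambda>k. e0 s01 s12 G (m k)) sums real_of_ereal (total_energy s01 s12 G m)"
proof -
  have "summable (\<lambda>k. e0 s01 s12 G (m k))"
    using summable_ereal[OF assms(1)] assms(2) unfolding total_energy_def by auto
  then show ?thesis
    unfolding total_energy_def by (simp add: suminf_ereal' summable_sums)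
qed

lemma admissible_single_bubble:
  assumes "fst M \<ge> 0" "snd M \<ge> 0"
  shows "admissible M (\<lambda>k. if k = 0 then M else 0)"
  using assms sums_single[of 0 "\<lambda>_. fst M"] sums_single[of 0 "\<lambda>_. snd M"]
  by (simp add: admissible_def if_distrib[of fst] if_distrib[of snd] cong: if_cong)

lemma admissible_merge:
  assumes "admissible M m" "k \<noteq> l"
  shows "admissible M (m(k := m k + m l, l := 0))"
proof -
  have "(\<lambda>i. fst ((m(k := m k + m l, l := 0)) i))
      = (\<lambda>i. fst (m i))(k := fst (m k) + fst (m l), l := 0)"
    "(\<lambda>i. snd ((m(k := m k + m l, l := 0)) i))
      = (\<lambda>i. snd (m i))(k := snd (m k) + snd (m l), l := 0)"
    using assms(2) by auto
  then show ?thesis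
    using assms sums_merge[of "\<lambda>i. fst (m i)"] sums_merge[of "\<lambda>i. snd (m i)"]
    by (simp add: admissible_def)
qed

lemma minimizing_config_le:
  assumes "minimizing_config s01 s12 G M m" "admissible M m'"
  shows "total_energy s01 s12 G m \<le> total_energy s01 s12 G m'"
  using assms unfolding minimizing_config_def e0_bar_def by (metis INF_lower mem_Collect_eq)

lemma minimizing_config_energy_finite:
  assumes "minimizing_config s01 s12 G M m" "fst M \<ge> 0" "snd M \<ge> 0"
  shows "total_energy s01 s12 G m < \<infinity>"
proof -
  have "(\<lambda>k. e0 s01 s12 G (if k = 0 then M else 0)) sums e0 s01 s12 G M"
    using sums_single[of 0 "\<lambda>_. e0 s01 s12 G M"]
    by (simp add: if_distrib[of "e0 s01 s12 G"] e0_zero cong: if_cong)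
  then have "total_energy s01 s12 G (\<lambda>k. if k = 0 then M else 0) = ereal (e0 s01 s12 G M)"
    by (rule total_energy_eq_ereal)
  then show ?thesis
    using minimizing_config_le[OF assms(1) admissible_single_bubble[OF assms(2,3)]] by auto
qed

lemma minimizing_config_merge_ge:
  assumes min: "minimizing_config s01 s12 G M m" and "k \<noteq> l"
    and "fst M \<ge> 0" "snd M \<ge> 0"
    and nonneg: "\<And>p. fst p \<ge> 0 \<Longrightarrow> snd p \<ge> 0 \<Longrightarrow> e0 s01 s12 G p \<ge> 0"
  shows "e0 s01 s12 G (m k) + e0 s01 s12 G (m l) \<le> e0 s01 s12 G (m k + m l)"
proof -
  define f where "f = (\<lambda>i. e0 s01 s12 G (m i))"
  define E where "E = real_of_ereal (total_energy s01 s12 G m)"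
  have adm: "admissible M m"
    using min by (simp add: minimizing_config_def)
  have "f sums E"
    using total_energy_finite_sums[OF _ minimizing_config_energy_finite[OF assms(1,3,4)]]
      nonneg adm by (simp add: f_def E_def admissible_def)
  then have E: "total_energy s01 s12 G m = ereal E"
    unfolding f_def by (rule total_energy_eq_ereal)
  have "(\<lambda>i. e0 s01 s12 G ((m(k := m k + m l, l := 0)) i))
      = f(k := e0 s01 s12 G (m k + m l), l := 0)"
    using \<open>k \<noteq> l\<close> by (auto simp: f_def e0_zero)
  moreover have "f(k := e0 s01 s12 G (m k + m l), l := 0)
      sums (E - f k + e0 s01 s12 G (m k + m l) - f l)"
    using sums_fun_upd[OF sums_fun_upd[OF \<open>f sums E\<close>, of k "e0 s01 s12 G (m k + m l)"], of l 0]
      \<open>k \<noteq> l\<close> by simp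
  ultimately have "total_energy s01 s12 G (m(k := m k + m l, l := 0))
      = ereal (E - f k + e0 s01 s12 G (m k + m l) - f l)"
    by (simp add: total_energy_eq_ereal)
  moreover have "total_energy s01 s12 G m \<le> total_energy s01 s12 G (m(k := m k + m l, l := 0))"
    using min admissible_merge[OF adm \<open>k \<noteq> l\<close>] by (rule minimizing_config_le)
  ultimately show ?thesis
    by (simp add: E f_def)
qed

theorem lemma3p4:
  fixes s01 s12 s02 :: real and G :: "nat \<Rightarrow> nat \<Rightarrow> real"
    and M :: "real \<times> real" and m :: "nat \<Rightarrow> real \<times> real"
  assumes "s01 > 0" and "s12 > 0" and "s02 = s01 + s12"
    and "G 1 1 \<ge> 0" and "G 2 2 \<ge> 0" and "G 1 2 = 0" and "G 2 1 = 0"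
    and "fst M > 0" and "snd M > 0"
    and "minimizing_config s01 s12 G M m"
  shows "\<not> (\<exists>k l. snd (m k) = 0 \<and> fst (m k) > 0 \<and> fst (m l) = 0 \<and> snd (m l) > 0)"
proof
  assume "\<exists>k l. snd (m k) = 0 \<and> fst (m k) > 0 \<and> fst (m l) = 0 \<and> snd (m l) > 0"
  then obtain k l a b where "m k = (a, 0)" "m l = (0, b)" "a > 0" "b > 0"
    by (metis prod.collapse)
  then have "k \<noteq> l"
    by auto
  have "e0 s01 s12 G (a, 0) + e0 s01 s12 G (0, b) \<le> e0 s01 s12 G ((a, 0) + (0, b))"
    using minimizing_config_merge_ge[OF assms(10) \<open>k \<noteq> l\<close>] e0_nonneg[of s01 s12 G] assms
      \<open>m k = (a, 0)\<close> \<open>m l = (0, b)\<close> by simp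
  with e0_merge_single_bubbles_less[of s01 G a b s12] assms \<open>a > 0\<close> \<open>b > 0\<close> show False
    by simp
qed

end
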